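(* Let $I$ be a 3-SAT instance and $E(I)$ the chore division instance constructed from it (see context), and let $(p,X)$ be a competitive equilibrium of $E(I)$. Let $C_r$ be a clause containing a literal on the variable $x_i$. Then: (1) if the literal is $x_i$ and $X_{a^i_1,b^i_2}>0$, then $p(m^r_i)\ge \tfrac{3\varepsilon}{2}$; (2) if the literal is $\neg x_i$ and $X_{a^i_1,b^i_2}=0$, then $p(m^r_i)\ge 2\varepsilon$.
   Context: Chore division with fixed earnings: agents $A$, chores $B$ each with supply one, disutility $d:A\times B\to(0,\infty)$, earnings $e:A\to\mathbb{R}_{\ge0}$, threshold $\tau$. A competitive equilibrium is $(p,X)$, $p\in\mathbb{R}^{B}_{\ge0}$, $X\in\mathbb{R}^{A\times B}_{\ge0}$, with (1) $X_{ab}>0$ only if $d(a,b)<\tau$ and $d(a,b)/p(b)\le d(a,b')/p(b')$ for all chores $b'$ (ratio with zero price is $+\infty$); (2) $\sum_b X_{ab}p(b)=e(a)$ for all $a$; (3) $\sum_a X_{ab}=1$ for all $b$. Construction $E(I)$: Let $I$ be a 3-SAT instance with variables $x_1,\dots,x_n$ and clauses $C_1,\dots,C_m$, each a disjunction of exactly three literals on three distinct variables. Fix constants $\tau>3$, $0<\varepsilon<1$ and $0<\varepsilon'<\varepsilon/2$. For each variable $x_i$ there are agents $a^i_1,a^i_2$ with $e(a^i_1)=e(a^i_2)=1$ and chores $b^i_1,b^i_2$, with $d(a^i_1,b^i_1)=1$, $d(a^i_1,b^i_2)=3$, $d(a^i_2,b^i_2)=1$. For each clause $C_r$ whose literals involve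 variables $x_i,x_j,x_k$ there are agents $n^r_i,n^r_j,n^r_k,\mathbf{n}^r$ and chores $m^r_i,m^r_j,m^r_k$; for each $\theta\in\{i,j,k\}$: if the literal is $x_\theta$, then $d(n^r_\theta,b^\theta_2)=d(\mathbf{n}^r,b^\theta_2)=1$ and $d(n^r_\theta,m^r_\theta)=d(\mathbf{n}^r,m^r_\theta)=\varepsilon$; if the literal is $\neg x_\theta$, then $d(n^r_\theta,b^\theta_1)=d(\mathbf{n}^r,b^\theta_1)=2/3$ and $d(n^r_\theta,m^r_\theta)=d(\mathbf{n}^r,m^r_\theta)=4\varepsilon/3$. All other disutilities equal $\tau$. Earnings: $e(n^r_\theta)=\varepsilon$ and $e(\mathbf{n}^r)=\#(C_r)\cdot\tfrac{\varepsilon}{2}+\overline{\#}(C_r)\cdot\varepsilon-\varepsilon'$, where $\#(C_r)$ and $\overline{\#}(C_r)$ are the numbers of unnegated and negated literals of $C_r$. *)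

theory Defs
  imports Complex_Main "HOL-Library.Extended_Real"
begin

definition ratio :: "real \<Rightarrow> real \<Rightarrow> ereal" where
  "ratio dv pr = (if pr = 0 then \<infinity> else ereal (dv / pr))"

definition competitive_equilibrium ::
  "'a set \<Rightarrow> 'b set \<Rightarrow> ('a \<Rightarrow> 'b \<Rightarrow> real) \<Rightarrow> ('a \<Rightarrow> real) \<Rightarrow> real
   \<Rightarrow> ('b \<Rightarrow> real) \<Rightarrow> ('a \<Rightarrow> 'b \<Rightarrow> real) \<Rightarrow> bool" where
  "competitive_equilibrium A B d e \<tau> p X \<longleftrightarrow>
     (\<forall>b\<in>B. p b \<ge> 0) \<and>
     (\<forall>a\<in>A. \<forall>b\<in>B. X a b \<ge> 0) \<and>
     (\<forall>a\<in>A. \<forall>b\<in>B. X a b > 0 \<longrightarrow>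
        d a b < \<tau> \<and> (\<forall>b'\<in>B. ratio (d a b) (p b) \<le> ratio (d a b') (p b'))) \<and>
     (\<forall>a\<in>A. (\<Sum>b\<in>B. X a b * p b) = e a) \<and>
     (\<forall>b\<in>B. (\<Sum>a\<in>A. X a b) = 1)"

text \<open>A literal is a pair (variable index, polarity); polarity True means the
  unnegated literal x_i, False means the negated literal (not x_i).\<close>
type_synonym literal = "nat \<times> bool"
type_synonym clause = "literal list"

definition valid_3sat :: "nat \<Rightarrow> clause list \<Rightarrow> bool" where
  "valid_3sat n cls \<longleftrightarrow>
     (\<forall>c\<in>set cls. length c = 3 \<and> distinct (map fst c) \<and> (\<forall>l\<in>set c. fst l < n))"

datatype agent =
    VA1 nat
  | VA2 nat
  | CA nat nat         \<comment> \<open>n^r_theta (clause r, variable theta)\<close>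
  | CBold nat

datatype chore =
    VB1 nat
  | VB2 nat
  | CM nat nat

definition E_agents :: "nat \<Rightarrow> clause list \<Rightarrow> agent set" where
  "E_agents n cls =
     VA1 ` {..<n} \<union> VA2 ` {..<n} \<union>
     {CA r \<theta> | r \<theta>. r < length cls \<and> \<theta> \<in> fst ` set (cls ! r)} \<union>
     CBold ` {..<length cls}"

definition E_chores :: "nat \<Rightarrow> clause list \<Rightarrow> chore set" where
  "E_chores n cls =
     VB1 ` {..<n} \<union> VB2 ` {..<n} \<union>
     {CM r \<theta> | r \<theta>. r < length cls \<and> \<theta> \<in> fst ` set (cls ! r)}"

text \<open>Disutility of a clause agent (either n^r_theta or bold n^r) of clause r
  for a chore, where for n^r_theta only the variable theta is relevant.\<close>
definition clause_dis :: "clause list \<Rightarrow> real \<Rightarrow> real \<Rightarrow> nat \<Rightarrow> (nat \<Rightarrow> bool) \<Rightarrow> chore \<Rightarrow> real" where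
  "clause_dis cls \<tau> \<epsilon> r rel b =
     (case b of
        VB2 j \<Rightarrow> if rel j \<and> (j, True) \<in> set (cls ! r) then 1 else \<tau>
      | VB1 j \<Rightarrow> if rel j \<and> (j, False) \<in> set (cls ! r) then 2/3 else \<tau>
      | CM r' j \<Rightarrow> if r' = r \<and> rel j \<and> (j, True) \<in> set (cls ! r) then \<epsilon>
                  else if r' = r \<and> rel j \<and> (j, False) \<in> set (cls ! r) then 4 * \<epsilon> / 3
                  else \<tau>)"

fun E_dis :: "clause list \<Rightarrow> real \<Rightarrow> real \<Rightarrow> agent \<Rightarrow> chore \<Rightarrow> real" where
  "E_dis cls \<tau> \<epsilon> (VA1 i) b =
     (if b = VB1 i then 1 else if b = VB2 i then 3 else \<tau>)"
| "E_dis cls \<tau> \<epsilon> (VA2 i) b = (if b = VB2 i then 1 else \<tau>)"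
| "E_dis cls \<tau> \<epsilon> (CA r \<theta>) b = clause_dis cls \<tau> \<epsilon> r (\<lambda>j. j = \<theta>) b"
| "E_dis cls \<tau> \<epsilon> (CBold r) b = clause_dis cls \<tau> \<epsilon> r (\<lambda>j. True) b"

definition num_pos :: "clause \<Rightarrow> nat" where
  "num_pos c = length (filter snd c)"

definition num_neg :: "clause \<Rightarrow> nat" where
  "num_neg c = length (filter (\<lambda>l. \<not> snd l) c)"

fun E_earn :: "clause list \<Rightarrow> real \<Rightarrow> real \<Rightarrow> agent \<Rightarrow> real" where
  "E_earn cls \<epsilon> \<epsilon>' (VA1 i) = 1"
| "E_earn cls \<epsilon> \<epsilon>' (VA2 i) = 1"
| "E_earn cls \<epsilon> \<epsilon>' (CA r \<theta>) = \<epsilon>"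
| "E_earn cls \<epsilon> \<epsilon>' (CBold r) =
     real (num_pos (cls ! r)) * (\<epsilon> / 2) + real (num_neg (cls ! r)) * \<epsilon> - \<epsilon>'"

end

theory Submission
  imports Defs
begin

text \<open>Every clause chore m^r_i is bought by n^r_i or by bold n^r, and buying it is maximum
  bang per buck for that agent. For a positive literal the agent's disutility ratio between
  b^i_2 and m^r_i is 1 : \<epsilon>, and if a^i_1 buys b^i_2 then p(b^i_2) \<ge> 3/2: buying b^i_2
  forces p(b^i_1) \<le> p(b^i_2)/3, while the two variable agents earn 2 in total out of at most
  one unit of each of b^i_1 and b^i_2, i.e. 2 \<le> p(b^i_1) + p(b^i_2) \<le> 4/3 p(b^i_2). For a negative literal the ratio between b^i_1
  and m^r_i is (2/3) : (4\<epsilon>/3), and if a^i_1 does not buy b^i_2 it earns its 1 from b^i_1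
  alone, forcing p(b^i_1) \<ge> 1.\<close>

lemma ce_alloc_eq_zero_if_unacceptable:
  assumes "competitive_equilibrium A B d e \<tau> p X" "a \<in> A" "b \<in> B" "\<not> d a b < \<tau>"
  shows "X a b = 0"
proof -
  have "X a b \<ge> 0" "X a b > 0 \<longrightarrow> d a b < \<tau>"
    using assms unfolding competitive_equilibrium_def by auto
  then show ?thesis using assms(4) by linarith
qed

lemma ce_mpb_price_ineq:
  assumes ce: "competitive_equilibrium A B d e \<tau> p X"
    and "a \<in> A" "b \<in> B" "b' \<in> B" "X a b > 0" and pos: "p b' > 0"
  shows "p b > 0" and "d a b * p b' \<le> d a b' * p b"
proof -
  have ratio_le: "ratio (d a b) (p b) \<le> ratio (d a b') (p b')"
    using ce assms unfolding competitive_equilibrium_def by blast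
  have "p b \<ge> 0" using ce assms unfolding competitive_equilibrium_def by blast
  moreover have "p b \<noteq> 0"
    using ratio_le pos by (auto simp: ratio_def)
  ultimately show pb: "p b > 0" by simp
  have "d a b / p b \<le> d a b' / p b'"
    using ratio_le pb pos by (simp add: ratio_def)
  then show "d a b * p b' \<le> d a b' * p b"
    using pb pos by (simp add: field_simps)
qed

lemma ce_earning_eq_sum_acceptable:
  assumes ce: "competitive_equilibrium A B d e \<tau> p X" and "finite B" "a \<in> A"
    and S: "S \<subseteq> B" and unacc: "\<forall>b\<in>B - S. \<not> d a b < \<tau>"
  shows "(\<Sum>b\<in>S. X a b * p b) = e a"
proof -
  have "(\<Sum>b\<in>S. X a b * p b) = (\<Sum>b\<in>B. X a b * p b)"
    using assms ce_alloc_eq_zero_if_unacceptable[OF ce \<open>a \<in> A\<close>]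
    by (intro sum.mono_neutral_left) auto
  also have "\<dots> = e a" using ce \<open>a \<in> A\<close> unfolding competitive_equilibrium_def by simp
  finally show ?thesis .
qed

lemma ce_alloc_sum_le_one:
  assumes ce: "competitive_equilibrium A B d e \<tau> p X" and "finite A" "S \<subseteq> A" "b \<in> B"
  shows "(\<Sum>a\<in>S. X a b) \<le> 1"
proof -
  have "(\<Sum>a\<in>S. X a b) \<le> (\<Sum>a\<in>A. X a b)"
    using assms unfolding competitive_equilibrium_def by (intro sum_mono2) auto
  also have "\<dots> = 1" using ce \<open>b \<in> B\<close> unfolding competitive_equilibrium_def by simp
  finally show ?thesis .
qed

lemma ce_alloc_le_one:
  assumes "competitive_equilibrium A B d e \<tau> p X" "finite A" "a \<in> A" "b \<in> B"
  shows "X a b \<le> 1"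
  using ce_alloc_sum_le_one[of A B d e \<tau> p X "{a}" b] assms by simp

lemma ce_chore_allocated:
  assumes ce: "competitive_equilibrium A B d e \<tau> p X" and "S \<subseteq> A" "b \<in> B"
    and unacc: "\<forall>a\<in>A - S. \<not> d a b < \<tau>"
  shows "\<exists>a\<in>S. X a b > 0"
proof (rule ccontr)
  assume "\<not> ?thesis"
  then have "\<forall>a\<in>A. X a b = 0"
    using assms ce_alloc_eq_zero_if_unacceptable[OF ce _ \<open>b \<in> B\<close>]
    unfolding competitive_equilibrium_def by (metis Diff_iff linorder_not_le order_antisym subsetD)
  then have "(\<Sum>a\<in>A. X a b) = 0" by simp
  then show False using ce \<open>b \<in> B\<close> unfolding competitive_equilibrium_def by simp
qed

lemma finite_clause_indexed:
  "finite {f r \<theta> | r \<theta>. r < length cls \<and> \<theta> \<in> fst ` set (cls ! r)}"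
proof -
  have "{f r \<theta> | r \<theta>. r < length cls \<and> \<theta> \<in> fst ` set (cls ! r)}
        = (\<lambda>(r, \<theta>). f r \<theta>) ` (SIGMA r:{..<length cls}. fst ` set (cls ! r))"
    by auto
  then show ?thesis by simp
qed

lemma finite_E_agents: "finite (E_agents n cls)"
  unfolding E_agents_def using finite_clause_indexed by auto

lemma finite_E_chores: "finite (E_chores n cls)"
  unfolding E_chores_def using finite_clause_indexed by auto

lemma E_variable_earnings:
  assumes ce: "competitive_equilibrium (E_agents n cls) (E_chores n cls)
               (E_dis cls \<tau> \<epsilon>) (E_earn cls \<epsilon> \<epsilon>') \<tau> p X"
    and "i < n"
  shows "X (VA1 i) (VB1 i) * p (VB1 i) + X (VA1 i) (VB2 i) * p (VB2 i) = 1"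
    and "X (VA2 i) (VB2 i) * p (VB2 i) = 1"
proof -
  have mem: "VA1 i \<in> E_agents n cls" "VA2 i \<in> E_agents n cls"
    "{VB1 i, VB2 i} \<subseteq> E_chores n cls" "{VB2 i} \<subseteq> E_chores n cls"
    using \<open>i < n\<close> unfolding E_agents_def E_chores_def by auto
  show "X (VA1 i) (VB1 i) * p (VB1 i) + X (VA1 i) (VB2 i) * p (VB2 i) = 1"
    using ce_earning_eq_sum_acceptable[OF ce finite_E_chores mem(1) mem(3)] by simp
  show "X (VA2 i) (VB2 i) * p (VB2 i) = 1"
    using ce_earning_eq_sum_acceptable[OF ce finite_E_chores mem(2) mem(4)] by simp
qed

lemma E_price_VB2_if_VA1_buys_VB2:
  assumes ce: "competitive_equilibrium (E_agents n cls) (E_chores n cls)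
               (E_dis cls \<tau> \<epsilon>) (E_earn cls \<epsilon> \<epsilon>') \<tau> p X"
    and "i < n" and buys: "X (VA1 i) (VB2 i) > 0"
  shows "p (VB2 i) \<ge> 3 / 2"
proof -
  let ?A = "E_agents n cls" and ?B = "E_chores n cls"
  have mem: "VA1 i \<in> ?A" "VA2 i \<in> ?A" "VB1 i \<in> ?B" "VB2 i \<in> ?B"
    using \<open>i < n\<close> unfolding E_agents_def E_chores_def by auto
  have nonneg: "p (VB1 i) \<ge> 0" "p (VB2 i) \<ge> 0" "X (VA2 i) (VB2 i) \<ge> 0"
    using ce mem unfolding competitive_equilibrium_def by auto
  note earn = E_variable_earnings[OF ce \<open>i < n\<close>]
  have p2_pos: "p (VB2 i) > 0"
    using earn(2) nonneg(2) by (cases "p (VB2 i) = 0") auto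
  have p1_le: "3 * p (VB1 i) \<le> p (VB2 i)"
  proof (cases "p (VB1 i) > 0")
    case True
    then show ?thesis using ce_mpb_price_ineq(2)[OF ce mem(1) mem(4) mem(3) buys] by simp
  qed (use nonneg in simp)
  have "X (VA1 i) (VB1 i) \<le> 1"
    using ce_alloc_le_one[OF ce finite_E_agents mem(1) mem(3)] .
  then have "X (VA1 i) (VB1 i) * p (VB1 i) \<le> p (VB1 i)"
    using mult_right_mono nonneg(1) by fastforce
  moreover have "(X (VA1 i) (VB2 i) + X (VA2 i) (VB2 i)) * p (VB2 i) \<le> p (VB2 i)"
    using ce_alloc_sum_le_one[OF ce finite_E_agents, of "{VA1 i, VA2 i}" "VB2 i"] mem p2_pos
    by (simp add: mult_left_le_one_le)
  ultimately show ?thesis using earn p1_le by (simp add: algebra_simps)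
qed

lemma E_price_VB1_if_VA1_avoids_VB2:
  assumes ce: "competitive_equilibrium (E_agents n cls) (E_chores n cls)
               (E_dis cls \<tau> \<epsilon>) (E_earn cls \<epsilon> \<epsilon>') \<tau> p X"
    and "i < n" and avoids: "X (VA1 i) (VB2 i) = 0"
  shows "p (VB1 i) \<ge> 1"
proof -
  let ?A = "E_agents n cls" and ?B = "E_chores n cls"
  have mem: "VA1 i \<in> ?A" "VA2 i \<in> ?A" "VB1 i \<in> ?B"
    using \<open>i < n\<close> unfolding E_agents_def E_chores_def by auto
  have "X (VA1 i) (VB1 i) \<le> 1"
    using ce_alloc_le_one[OF ce finite_E_agents mem(1) mem(3)] .
  moreover have "p (VB1 i) \<ge> 0" using ce mem unfolding competitive_equilibrium_def by auto
  moreover have "X (VA1 i) (VB1 i) * p (VB1 i) = 1"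
    using E_variable_earnings(1)[OF ce \<open>i < n\<close>] avoids by simp
  ultimately show ?thesis using mult_right_mono by fastforce
qed

lemma E_clause_chore_allocated:
  assumes ce: "competitive_equilibrium (E_agents n cls) (E_chores n cls)
               (E_dis cls \<tau> \<epsilon>) (E_earn cls \<epsilon> \<epsilon>') \<tau> p X"
    and "r < length cls" "i \<in> fst ` set (cls ! r)"
  obtains c where "c \<in> {CA r i, CBold r}" "c \<in> E_agents n cls" "X c (CM r i) > 0"
proof -
  have S: "{CA r i, CBold r} \<subseteq> E_agents n cls" and m: "CM r i \<in> E_chores n cls"
    using assms unfolding E_agents_def E_chores_def by auto
  have "\<forall>a\<in>E_agents n cls - {CA r i, CBold r}. \<not> E_dis cls \<tau> \<epsilon> a (CM r i) < \<tau>"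
  proof
    fix a assume "a \<in> E_agents n cls - {CA r i, CBold r}"
    then show "\<not> E_dis cls \<tau> \<epsilon> a (CM r i) < \<tau>"
      by (cases a) (auto simp: clause_dis_def)
  qed
  then show ?thesis using ce_chore_allocated[OF ce S m] S that by blast
qed

lemma valid_3sat_literalD:
  assumes "valid_3sat n cls" "r < length cls" and lit: "(i, pol) \<in> set (cls ! r)"
  shows "i < n" and "(i, \<not> pol) \<notin> set (cls ! r)"
proof -
  have inj: "inj_on fst (set (cls ! r))" and bound: "\<forall>l\<in>set (cls ! r). fst l < n"
    using assms unfolding valid_3sat_def by (auto simp: distinct_map)
  show "i < n" using bound lit by auto
  show "(i, \<not> pol) \<notin> set (cls ! r)"
  proof
    assume "(i, \<not> pol) \<in> set (cls ! r)"
    then have "(i, \<not> pol) = (i, pol)" using inj lit by (metis fst_conv inj_on_def)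
    then show False by simp
  qed
qed

theorem mainTheorem3:
  fixes n :: nat and cls :: "clause list"
    and \<tau> \<epsilon> \<epsilon>' :: real
    and p :: "chore \<Rightarrow> real" and X :: "agent \<Rightarrow> chore \<Rightarrow> real"
    and r i :: nat and pol :: bool
  assumes inst: "valid_3sat n cls"
    and tau: "\<tau> > 3"
    and eps: "0 < \<epsilon>" "\<epsilon> < 1"
    and eps': "0 < \<epsilon>'" "\<epsilon>' < \<epsilon> / 2"
    and ce: "competitive_equilibrium (E_agents n cls) (E_chores n cls)
               (E_dis cls \<tau> \<epsilon>) (E_earn cls \<epsilon> \<epsilon>') \<tau> p X"
    and r: "r < length cls"
    and lit: "(i, pol) \<in> set (cls ! r)"
  shows "(pol \<and> X (VA1 i) (VB2 i) > 0 \<longrightarrow> p (CM r i) \<ge> 3 * \<epsilon> / 2) \<and>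
         (\<not> pol \<and> X (VA1 i) (VB2 i) = 0 \<longrightarrow> p (CM r i) \<ge> 2 * \<epsilon>)"
proof -
  note lit_facts = valid_3sat_literalD[OF inst r lit]
  have mem: "CM r i \<in> E_chores n cls" "VB1 i \<in> E_chores n cls" "VB2 i \<in> E_chores n cls"
    using lit_facts(1) r lit unfolding E_chores_def by force+
  have "i \<in> fst ` set (cls ! r)" using lit by force
  then obtain c where c: "c \<in> {CA r i, CBold r}" "c \<in> E_agents n cls" "X c (CM r i) > 0"
    by (rule E_clause_chore_allocated[OF ce r])
  note mpb = ce_mpb_price_ineq[OF ce c(2) mem(1) _ c(3)]
  show ?thesis
  proof (intro conjI impI)
    assume h: "pol \<and> X (VA1 i) (VB2 i) > 0"
    have p2: "p (VB2 i) \<ge> 3 / 2" using E_price_VB2_if_VA1_buys_VB2[OF ce lit_facts(1)] h by simp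
    then have "3 * \<epsilon> / 2 \<le> \<epsilon> * p (VB2 i)" using eps(1) by simp
    also have "\<dots> \<le> p (CM r i)"
      using mpb(2)[OF mem(3)] p2 c(1) h lit by (auto simp: clause_dis_def)
    finally show "p (CM r i) \<ge> 3 * \<epsilon> / 2" .
  next
    assume h: "\<not> pol \<and> X (VA1 i) (VB2 i) = 0"
    have p1: "p (VB1 i) \<ge> 1" using E_price_VB1_if_VA1_avoids_VB2[OF ce lit_facts(1)] h by simp
    then have "2 * \<epsilon> \<le> 2 * \<epsilon> * p (VB1 i)" using eps(1) by simp
    also have "\<dots> \<le> p (CM r i)"
      using mpb(2)[OF mem(2)] p1 c(1) h lit lit_facts(2) by (auto simp: clause_dis_def)
    finally show "p (CM r i) \<ge> 2 * \<epsilon>" .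
  qed
qed

end
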